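(* Assume the matching setting described in the context. (a) For every matching $M=\{e_1,\ldots,e_k\}$, every $\sigma\in\Omega$ and every ordering of $M$, the iterates $\sigma_0=\sigma$, $\sigma_i=\hat\psi(\{e_i\},\sigma_{i-1})$ satisfy $\{e_1,\ldots,e_i\}\subseteq\sigma_i$ for all $i\in[k]$. In particular $M\subseteq\hat\psi(M,\sigma)$. (b) For every $\sigma\in\Omega$ and all matchings $M,M'$ with $M\cup M'$ a matching, $\hat\psi(M,\hat\psi(M',\sigma))=\hat\psi(M',\hat\psi(M,\sigma))$. Consequently, the resampling oracles $\rho$ defined from $\psi$ are weakly commutative with respect to $\sim$. (c) $(F,\sim)$ is a potential causality graph for these resampling oracles.
   Context: Let $G=(V,E)$ be an undirected graph with $|V|=2n$ of one of the following two types: [P1] $G$ is the complete graph on $V$; [P2] $V$ is partitioned into sets $A_1,B_1,\ldots,A_r,B_r$ with $|A_i|=|B_i|$, and $E=\{\{u,v\}:u\in A_i,v\in B_i,i\in[r]\}$. In both cases $G$ has the property that whenever $(u',u,v,v')$ is a path in $G$ with distinct nodes, $\{u',v'\}\in E$. $\Omega$ is the set of perfect matchings of $G$ (each viewed as a set of edges), and $\mathcal{M}$ is the set of all matchings of $G$. For $M\in\mathcal{M}$ let $f_M=\{\sigma\in\Omega:M\subseteq\sigma\}$. The flaw set $F$ is any set of flaws of the form $f_M$, $M\in\mathcal{M}$, each nonempty. Define $f_M\sim f_{M'}$ iff $M\cup M'$ is not a matching or $M=M'$. Map $\hat\psi:\mathcal{M}\times\Omega\to\Omega$. For a single edge $e=\{u,v\}$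 let $u',v'$ be the nodes with $\{u,u'\},\{v,v'\}\in\sigma$, and set $\hat\psi(\{e\},\sigma)=(\sigma\setminus\{\{u,u'\},\{v,v'\}\})\cup\{\{u,v\},\{u',v'\}\}$; this equals $\sigma$ if $e\in\sigma$. For $M=\{e_1,\ldots,e_k\}$ (with $\hat\psi(\varnothing,\sigma)=\sigma$), set $\sigma_0=\sigma$, $\sigma_i=\hat\psi(\{e_i\},\sigma_{i-1})$ and $\hat\psi(M,\sigma)=\sigma_k$; the result does not depend on the ordering of $M$. Resampling oracles: for $f_M\in F$ and $\sigma\in f_M$ let $A(f_M,\sigma)=\{\sigma'\in\Omega:\hat\psi(M,\sigma')=\sigma\}$, and let $\rho(\cdot\mid f_M,\sigma)$ be uniform on $A(f_M,\sigma)$. A step $\sigma\xrightarrow{f}\sigma'$ means $\sigma\in f$ and $\sigma'\in A(f,\sigma)$. Weak commutativity w.r.t. $\sim$: there is an injective map sending each two-step walk $\sigma_1\xrightarrow{f}\sigma_2\xrightarrow{g}\sigma_3$ with $f\not\sim g$ to a walk $\sigma_1\xrightarrow{g}\sigma_2'\xrightarrow{f}\sigma_3$. $(F,\sim)$ is a potential causality graph if for every step $\sigma\xrightarrow{f}\sigma'$ one has $\{g\in F:\sigma'\in g\}\subseteq(\{g\in F:\sigma\in g\}\setminus\{f\})\cup\{g:f\sim g\}$. *)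

theory Defs
  imports Main
begin

definition P1_graph :: "'a set \<Rightarrow> 'a set set \<Rightarrow> bool" where
  "P1_graph V E \<longleftrightarrow> E = {{u, v} | u v. u \<in> V \<and> v \<in> V \<and> u \<noteq> v}"

definition P2_graph :: "'a set \<Rightarrow> 'a set set \<Rightarrow> bool" where
  "P2_graph V E \<longleftrightarrow> (\<exists>(r::nat) (A::nat \<Rightarrow> 'a set) (B::nat \<Rightarrow> 'a set).
     (\<forall>i<r. A i \<noteq> {} \<and> B i \<noteq> {} \<and> card (A i) = card (B i)) \<and>
     (\<forall>i<r. \<forall>j<r. A i \<inter> B j = {} \<and> (i \<noteq> j \<longrightarrow> A i \<inter> A j = {} \<and> B i \<inter> B j = {})) \<and>
     V = (\<Union>i<r. A i \<union> B i) \<and>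
     E = {{u, v} | u v i. i < r \<and> u \<in> A i \<and> v \<in> B i})"

definition matching :: "'a set set \<Rightarrow> 'a set set \<Rightarrow> bool" where
  "matching E M \<longleftrightarrow> M \<subseteq> E \<and> (\<forall>e\<in>M. \<forall>e'\<in>M. e \<noteq> e' \<longrightarrow> e \<inter> e' = {})"

definition perfect_matching :: "'a set \<Rightarrow> 'a set set \<Rightarrow> 'a set set \<Rightarrow> bool" where
  "perfect_matching V E \<sigma> \<longleftrightarrow> matching E \<sigma> \<and> \<Union>\<sigma> = V"

definition partner :: "'a set set \<Rightarrow> 'a \<Rightarrow> 'a" where
  "partner \<sigma> u = (THE w. {u, w} \<in> \<sigma>)"

definition psi_edge :: "'a set \<Rightarrow> 'a set set \<Rightarrow> 'a set set" where
  "psi_edge e \<sigma> =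
     (let u = (SOME u. u \<in> e); v = (SOME v. v \<in> e \<and> v \<noteq> u);
          u' = partner \<sigma> u; v' = partner \<sigma> v
      in (\<sigma> - {{u, u'}, {v, v'}}) \<union> {{u, v}, {u', v'}})"

definition psi_list :: "'a set list \<Rightarrow> 'a set set \<Rightarrow> 'a set set" where
  "psi_list es \<sigma> = fold psi_edge es \<sigma>"

definition psi :: "'a set set \<Rightarrow> 'a set set \<Rightarrow> 'a set set" where
  "psi M \<sigma> = psi_list (SOME es. set es = M \<and> distinct es) \<sigma>"

text \<open>Flaws are indexed by matchings M; the flaw is f_M.\<close>
definition flaw :: "'a set \<Rightarrow> 'a set set \<Rightarrow> 'a set set \<Rightarrow> 'a set set set" where
  "flaw V E M = {\<sigma>. perfect_matching V E \<sigma> \<and> M \<subseteq> \<sigma>}"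

definition dep :: "'a set set \<Rightarrow> 'a set set \<Rightarrow> 'a set set \<Rightarrow> bool" where
  "dep E M M' \<longleftrightarrow> \<not> matching E (M \<union> M') \<or> M = M'"

text \<open>Support A(f_M, sigma) of the resampling distribution rho(. | f_M, sigma).\<close>
definition resample_set :: "'a set \<Rightarrow> 'a set set \<Rightarrow> 'a set set \<Rightarrow> 'a set set \<Rightarrow> 'a set set set" where
  "resample_set V E M \<sigma> = {\<sigma>'. perfect_matching V E \<sigma>' \<and> psi M \<sigma>' = \<sigma>}"

definition mstep :: "'a set \<Rightarrow> 'a set set \<Rightarrow> 'a set set \<Rightarrow> 'a set set \<Rightarrow> 'a set set \<Rightarrow> bool" where
  "mstep V E \<sigma> M \<sigma>' \<longleftrightarrow> \<sigma> \<in> flaw V E M \<and> \<sigma>' \<in> resample_set V E M \<sigma>"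

definition weakly_commutative ::
  "('s \<Rightarrow> 'f \<Rightarrow> 's \<Rightarrow> bool) \<Rightarrow> 'f set \<Rightarrow> ('f \<Rightarrow> 'f \<Rightarrow> bool) \<Rightarrow> bool" where
  "weakly_commutative step F D \<longleftrightarrow>
     (let W = {(s1, f, s2, g, s3). f \<in> F \<and> g \<in> F \<and> \<not> D f g \<and> step s1 f s2 \<and> step s2 g s3}
      in \<exists>\<Phi>. inj_on \<Phi> W \<and>
         (\<forall>(s1, f, s2, g, s3) \<in> W. \<exists>s2'. \<Phi> (s1, f, s2, g, s3) = (s1, g, s2', f, s3) \<and>
              step s1 g s2' \<and> step s2' f s3))"

definition potential_causality_graph ::
  "('s \<Rightarrow> 'f \<Rightarrow> 's \<Rightarrow> bool) \<Rightarrow> ('f \<Rightarrow> 's set) \<Rightarrow> 'f set \<Rightarrow> ('f \<Rightarrow> 'f \<Rightarrow> bool) \<Rightarrow> bool" where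
  "potential_causality_graph step fl F D \<longleftrightarrow>
     (\<forall>f\<in>F. \<forall>s s'. step s f s' \<longrightarrow>
        {g \<in> F. s' \<in> fl g} \<subseteq> ({g \<in> F. s \<in> fl g} - {f}) \<union> {g. D f g})"

end

theory Submission
  imports Defs
begin

text \<open>A perfect matching is the same thing as a fixed-point-free involution of the vertices along
edges (its partner function), and resampling an edge \<open>{a, b}\<close> rematches \<open>a\<close> with \<open>b\<close> and
their old partners with each other. The path property of the graph says exactly that the new pair of
old partners is again an edge, so perfect matchings are preserved. On the level of involutions,
rematching along two disjoint edges commutes, and rematching along an edge already in the matching
does nothing; hence on perfect matchings the single-edge maps along a matching form a commuting
idempotent family, so \<open>\<psi>\<close> along a matching is the finite-set fold of that family, independent of
the ordering, and \<open>\<psi>(M, \<psi>(M', \<sigma>)) = \<psi>(M' \<union> M, \<sigma>)\<close>. Weak commutativity and the causality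
graph property follow because a step along \<open>f\<close> is determined by its target, and keeps every
matching compatible with \<open>f\<close>.\<close>

text \<open>The defining formula of \<open>psi_edge\<close> is symmetric in the two endpoints, so the
choice made by \<open>SOME\<close> is irrelevant.\<close>

lemma psi_edge_doubleton:
  assumes "a \<noteq> b"
  shows "psi_edge {a, b} \<sigma> =
    (\<sigma> - {{a, partner \<sigma> a}, {b, partner \<sigma> b}}) \<union> {{a, b}, {partner \<sigma> a, partner \<sigma> b}}"
proof -
  define u where "u = (SOME u. u \<in> {a, b})"
  define v where "v = (SOME v. v \<in> {a, b} \<and> v \<noteq> u)"
  have u: "u \<in> {a, b}" unfolding u_def by (rule someI[of _ a]) simp
  have v: "v \<in> {a, b} \<and> v \<noteq> u"
    unfolding v_def by (rule someI[of _ "if u = a then b else a"]) (use u assms in auto)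
  have "(u = a \<and> v = b) \<or> (u = b \<and> v = a)" using u v by auto
  then show ?thesis
    unfolding psi_edge_def Let_def u_def[symmetric] v_def[symmetric] by (auto simp: insert_commute)
qed

lemma matching_subset: "matching E M \<Longrightarrow> N \<subseteq> M \<Longrightarrow> matching E N"
  unfolding matching_def by blast

locale path_closed_graph =
  fixes V :: "'a set" and E :: "'a set set"
  assumes finite_V: "finite V"
    and edge_doubleton: "e \<in> E \<Longrightarrow> \<exists>a b. e = {a, b} \<and> a \<noteq> b \<and> a \<in> V \<and> b \<in> V"
    and path_closed: "\<lbrakk>{x, u} \<in> E; {u, v} \<in> E; {v, y} \<in> E; x \<noteq> v; u \<noteq> y; x \<noteq> y\<rbrakk> \<Longrightarrow> {x, y} \<in> E"
begin

abbreviation PM :: "'a set set \<Rightarrow> bool" where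
  "PM \<sigma> \<equiv> perfect_matching V E \<sigma>"

lemma finite_E: "finite E"
  by (rule finite_subset[of _ "Pow V"]) (use edge_doubleton finite_V in auto)

lemma Un_subset_fold_psi_edge:
  assumes "matching E (set es \<union> N)" and "N \<subseteq> \<sigma>"
  shows "set es \<union> N \<subseteq> fold psi_edge es \<sigma>"
  using assms
proof (induction es arbitrary: \<sigma> N)
  case Nil
  then show ?case by simp
next
  case (Cons e es)
  have "e \<in> E" using Cons.prems(1) unfolding matching_def by auto
  then obtain a b where e: "e = {a, b}" "a \<noteq> b" using edge_doubleton by blast
  have "insert e N \<subseteq> psi_edge e \<sigma>"
  proof
    fix e' assume e': "e' \<in> insert e N"
    show "e' \<in> psi_edge e \<sigma>"
    proof (cases "e' = e")
      case False
      then have "e' \<in> \<sigma>" "a \<notin> e'" "b \<notin> e'"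
        using Cons.prems e' e(1) unfolding matching_def by auto
      then show ?thesis unfolding e(1) psi_edge_doubleton[OF e(2)] by auto
    qed (simp add: e psi_edge_doubleton)
  qed
  moreover have "set es \<union> insert e N = set (e # es) \<union> N" by simp
  ultimately show ?case using Cons.IH[of "insert e N" "psi_edge e \<sigma>"] Cons.prems(1) by simp
qed

lemma psi_as_fold:
  assumes "matching E M"
  obtains es where "set es = M" "psi M \<sigma> = fold psi_edge es \<sigma>"
proof -
  have "finite M" using assms finite_E unfolding matching_def by (blast intro: finite_subset)
  then have "\<exists>es. set es = M \<and> distinct es" by (rule finite_distinct_list)
  then have "set (SOME es. set es = M \<and> distinct es) = M" by (metis (mono_tags, lifting) someI_ex)
  then show ?thesis by (rule that) (simp add: psi_def psi_list_def)
qed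

lemma Un_subset_psi:
  assumes "matching E (M \<union> N)" and "N \<subseteq> \<sigma>"
  shows "M \<union> N \<subseteq> psi M \<sigma>"
proof -
  obtain es where "set es = M" "psi M \<sigma> = fold psi_edge es \<sigma>"
    using psi_as_fold matching_subset[OF assms(1)] by blast
  then show ?thesis using Un_subset_fold_psi_edge[of es N \<sigma>] assms by simp
qed

definition pairing :: "('a \<Rightarrow> 'a) \<Rightarrow> bool" where
  "pairing q \<longleftrightarrow> (\<forall>x\<in>V. q x \<in> V \<and> q x \<noteq> x \<and> q (q x) = x \<and> {x, q x} \<in> E)"

definition matching_of :: "('a \<Rightarrow> 'a) \<Rightarrow> 'a set set" where
  "matching_of q = {{x, q x} | x. x \<in> V}"

lemma pairingD:
  assumes "pairing q" and "x \<in> V"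
  shows "q x \<in> V" "q x \<noteq> x" "q (q x) = x" "{x, q x} \<in> E"
  using assms unfolding pairing_def by auto

lemma matching_of_cong: "(\<And>x. x \<in> V \<Longrightarrow> q x = q' x) \<Longrightarrow> matching_of q = matching_of q'"
  unfolding matching_of_def by force

lemma pairing_in_matching_of:
  assumes "pairing q" and "{x, w} \<in> matching_of q"
  shows "x \<in> V" "w = q x"
proof -
  obtain y where y: "y \<in> V" "{x, w} = {y, q y}"
    using assms(2) unfolding matching_of_def by blast
  with pairingD[OF assms(1) y(1)] show "x \<in> V" "w = q x" by (auto simp: doubleton_eq_iff)
qed

lemma partner_matching_of:
  assumes "pairing q" and "x \<in> V"
  shows "partner (matching_of q) x = q x"
  unfolding partner_def
proof (rule the_equality)
  show "{x, q x} \<in> matching_of q" using assms(2) unfolding matching_of_def by blast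
qed (use pairing_in_matching_of[OF assms(1)] in blast)

lemma perfect_matching_of:
  assumes q: "pairing q"
  shows "PM (matching_of q)"
proof -
  have same_edge: "{x, q x} = {z, q z}" if "x \<in> V" "z \<in> {x, q x}" for x z
    using q that unfolding pairing_def by (auto simp: insert_commute)
  have "matching E (matching_of q)"
    unfolding matching_def
  proof (intro conjI ballI impI)
    show "matching_of q \<subseteq> E" using q unfolding matching_of_def pairing_def by blast
    fix e e' assume "e \<in> matching_of q" "e' \<in> matching_of q" "e \<noteq> e'"
    then show "e \<inter> e' = {}" unfolding matching_of_def using same_edge by blast
  qed
  moreover have "\<Union> (matching_of q) = V" using q unfolding matching_of_def pairing_def by blast
  ultimately show ?thesis unfolding perfect_matching_def by blast
qed

lemma perfect_matching_unique_partner: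
  assumes "PM \<sigma>" and "x \<in> V"
  shows "\<exists>!w. {x, w} \<in> \<sigma>"
proof -
  have disjoint: "e = e'" if "e \<in> \<sigma>" "e' \<in> \<sigma>" "x \<in> e" "x \<in> e'" for e e'
    using assms(1) that unfolding perfect_matching_def matching_def by blast
  have edge: "\<exists>a b. e = {a, b} \<and> a \<noteq> b" if "e \<in> \<sigma>" for e
    using assms(1) that edge_doubleton unfolding perfect_matching_def matching_def by blast
  obtain e where "e \<in> \<sigma>" "x \<in> e" using assms unfolding perfect_matching_def by blast
  then obtain w where w: "{x, w} \<in> \<sigma>" "w \<noteq> x" using edge by (metis insert_commute insertE singletonD)
  have "w' = w" if "{x, w'} \<in> \<sigma>" for w'
    using disjoint[OF that w(1)] edge[OF that] w(2) by (auto simp: doubleton_eq_iff)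
  with w(1) show ?thesis by blast
qed

lemma partner_eqI:
  assumes "PM \<sigma>" and "{x, w} \<in> \<sigma>"
  shows "partner \<sigma> x = w"
proof -
  have "x \<in> V" using assms unfolding perfect_matching_def by blast
  then show ?thesis
    using the1_equality[OF perfect_matching_unique_partner[OF assms(1)] assms(2)]
    unfolding partner_def by blast
qed

lemma perfect_matching_pairing:
  assumes "PM \<sigma>"
  shows "pairing (partner \<sigma>)" and "\<sigma> = matching_of (partner \<sigma>)"
proof -
  have partner: "{x, partner \<sigma> x} \<in> \<sigma>" if "x \<in> V" for x
    using theI'[OF perfect_matching_unique_partner[OF assms that]] unfolding partner_def .
  have edge: "\<exists>a b. e = {a, b} \<and> a \<noteq> b \<and> a \<in> V \<and> b \<in> V" "e \<in> E" if "e \<in> \<sigma>" for e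
    using assms that edge_doubleton unfolding perfect_matching_def matching_def by blast+
  show "pairing (partner \<sigma>)"
    unfolding pairing_def
  proof
    fix x assume "x \<in> V"
    then have "{x, partner \<sigma> x} \<in> \<sigma>" by (rule partner)
    moreover from this have "partner \<sigma> (partner \<sigma> x) = x"
      by (intro partner_eqI[OF assms]) (simp add: insert_commute)
    ultimately show "partner \<sigma> x \<in> V \<and> partner \<sigma> x \<noteq> x \<and> partner \<sigma> (partner \<sigma> x) = x \<and> {x, partner \<sigma> x} \<in> E"
      using edge by (fastforce simp: doubleton_eq_iff)
  qed
  show "\<sigma> = matching_of (partner \<sigma>)"
    unfolding matching_of_def using partner partner_eqI[OF assms] edge(1) by blast
qed

definition rematch :: "('a \<Rightarrow> 'a) \<Rightarrow> 'a \<Rightarrow> 'a \<Rightarrow> 'a \<Rightarrow> 'a" where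
  "rematch p u v x =
    (if x = u then v else if x = v then u else if x = p u then p v else if x = p v then p u else p x)"

lemma rematch_cong:
  assumes "\<And>y. y \<in> V \<Longrightarrow> q y = q' y" and "u \<in> V" "v \<in> V" "x \<in> V"
  shows "rematch q u v x = rematch q' u v x"
  using assms unfolding rematch_def by simp

lemma pairing_rematch:
  assumes p: "pairing p" and uv: "{u, v} \<in> E"
  shows "pairing (rematch p u v)"
proof -
  obtain a b where "{u, v} = {a, b}" "a \<noteq> b" "a \<in> V" "b \<in> V" using edge_doubleton[OF uv] by blast
  then have uvV: "u \<noteq> v" "u \<in> V" "v \<in> V" by (auto simp: doubleton_eq_iff)
  note pV = pairingD[OF p]
  have "p u \<noteq> p v" using pV uvV by metis
  have "{p u, p v} \<in> E"
  proof (cases "p u = v")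
    case True
    then show ?thesis using uv pV(3)[OF uvV(2)] by (auto simp: insert_commute)
  next
    case False
    then have "p v \<noteq> u" using pV uvV by metis
    moreover have "{p u, u} \<in> E" "{v, p v} \<in> E" using pV(4) uvV by (auto simp: insert_commute)
    ultimately show ?thesis using path_closed uv False \<open>p u \<noteq> p v\<close> by blast
  qed
  then show ?thesis
    unfolding pairing_def
  proof (intro ballI conjI)
    fix x assume x: "x \<in> V"
    show "rematch p u v x \<in> V" "rematch p u v x \<noteq> x"
      using x uvV pV \<open>p u \<noteq> p v\<close> unfolding rematch_def by auto
    show "rematch p u v (rematch p u v x) = x"
      using x uvV pV \<open>p u \<noteq> p v\<close> unfolding rematch_def by (smt (verit))
    show "{x, rematch p u v x} \<in> E"
      using x uv pV(4) \<open>{p u, p v} \<in> E\<close> unfolding rematch_def by (auto simp: insert_commute)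
  qed
qed

lemma matching_of_rematch:
  assumes p: "pairing p" and uv: "u \<in> V" "v \<in> V" "u \<noteq> v"
  shows "(matching_of p - {{u, p u}, {v, p v}}) \<union> {{u, v}, {p u, p v}} = matching_of (rematch p u v)"
proof -
  note pV = pairingD[OF p]
  have "p u \<noteq> p v" using pV uv by metis
  have rematch_pu: "rematch p u v (p u) = p v" and rematch_pv: "rematch p u v (p v) = p u"
    using pV uv \<open>p u \<noteq> p v\<close> unfolding rematch_def by auto
  show ?thesis
  proof (intro equalityI subsetI)
    fix e assume "e \<in> (matching_of p - {{u, p u}, {v, p v}}) \<union> {{u, v}, {p u, p v}}"
    then consider "e = {u, v}" | "e = {p u, p v}"
      | "e \<in> matching_of p" "e \<noteq> {u, p u}" "e \<noteq> {v, p v}" by blast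
    then show "e \<in> matching_of (rematch p u v)"
    proof cases
      case 1
      have "{u, rematch p u v u} \<in> matching_of (rematch p u v)"
        using uv unfolding matching_of_def by blast
      then show ?thesis using 1 by (simp add: rematch_def)
    next
      case 2
      have "{p u, rematch p u v (p u)} \<in> matching_of (rematch p u v)"
        using pV uv unfolding matching_of_def by blast
      then show ?thesis using 2 rematch_pu by simp
    next
      case 3
      then obtain x where x: "x \<in> V" "e = {x, p x}" unfolding matching_of_def by blast
      then have "x \<notin> {u, v, p u, p v}"
        using 3 pV[OF uv(1)] pV[OF uv(2)] by (auto simp: insert_commute)
      then have "rematch p u v x = p x" unfolding rematch_def by auto
      then show ?thesis using x unfolding matching_of_def by auto
    qed
  next
    fix e assume "e \<in> matching_of (rematch p u v)"
    then obtain x where x: "x \<in> V" "e = {x, rematch p u v x}" unfolding matching_of_def by blast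
    consider "x = u" | "x = v" | "x = p u" | "x = p v" | "x \<notin> {u, v, p u, p v}" by blast
    then show "e \<in> (matching_of p - {{u, p u}, {v, p v}}) \<union> {{u, v}, {p u, p v}}"
    proof cases
      case 1
      then show ?thesis using x unfolding rematch_def by simp
    next
      case 2
      then show ?thesis using x uv unfolding rematch_def by (simp add: insert_commute)
    next
      case 3
      then show ?thesis using x rematch_pu by simp
    next
      case 4
      then show ?thesis using x rematch_pv by (simp add: insert_commute)
    next
      case 5
      then have "rematch p u v x = p x" unfolding rematch_def by auto
      moreover have "{x, p x} \<noteq> {u, p u}" "{x, p x} \<noteq> {v, p v}"
        using 5 by (auto simp: doubleton_eq_iff)
      ultimately show ?thesis using x unfolding matching_of_def by auto
    qed
  qed
qed

lemma psi_edge_perfect: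
  assumes "PM \<sigma>" and "{a, b} \<in> E"
  shows "psi_edge {a, b} \<sigma> = matching_of (rematch (partner \<sigma>) a b)"
proof -
  obtain c d where "{a, b} = {c, d}" "c \<noteq> d" "c \<in> V" "d \<in> V"
    using edge_doubleton[OF assms(2)] by blast
  then have ab: "a \<noteq> b" "a \<in> V" "b \<in> V" by (auto simp: doubleton_eq_iff)
  define p where "p = partner \<sigma>"
  have p: "pairing p" "\<sigma> = matching_of p"
    unfolding p_def using perfect_matching_pairing[OF assms(1)] by auto
  have "psi_edge {a, b} \<sigma> = (\<sigma> - {{a, p a}, {b, p b}}) \<union> {{a, b}, {p a, p b}}"
    unfolding p_def by (rule psi_edge_doubleton[OF ab(1)])
  also have "\<dots> = matching_of (rematch p a b)"
    unfolding p(2) by (rule matching_of_rematch[OF p(1) ab(2,3,1)])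
  finally show ?thesis unfolding p_def .
qed

lemma partner_psi_edge:
  assumes "PM \<sigma>" and "{a, b} \<in> E" and "x \<in> V"
  shows "partner (psi_edge {a, b} \<sigma>) x = rematch (partner \<sigma>) a b x"
  using partner_matching_of[OF pairing_rematch[OF perfect_matching_pairing(1)[OF assms(1)] assms(2)] assms(3)]
  unfolding psi_edge_perfect[OF assms(1,2)] .

lemma perfect_matching_psi_edge:
  assumes "PM \<sigma>" and "e \<in> E"
  shows "PM (psi_edge e \<sigma>)"
proof -
  obtain a b where "e = {a, b}" using edge_doubleton[OF assms(2)] by blast
  then show ?thesis
    using assms psi_edge_perfect perfect_matching_of pairing_rematch perfect_matching_pairing(1) by metis
qed

lemma psi_edge_idem:
  assumes "PM \<sigma>" and "e \<in> E"
  shows "psi_edge e (psi_edge e \<sigma>) = psi_edge e \<sigma>"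
proof -
  obtain a b where e: "e = {a, b}" "a \<noteq> b" using edge_doubleton[OF assms(2)] by blast
  define \<tau> where "\<tau> = psi_edge e \<sigma>"
  have "PM \<tau>" unfolding \<tau>_def using perfect_matching_psi_edge[OF assms] .
  moreover have "{a, b} \<in> \<tau>" unfolding \<tau>_def e psi_edge_doubleton[OF e(2)] by simp
  ultimately have "partner \<tau> a = b" "partner \<tau> b = a"
    using partner_eqI by (metis insert_commute)+
  with \<open>{a, b} \<in> \<tau>\<close> have "psi_edge e \<tau> = \<tau>"
    unfolding e psi_edge_doubleton[OF e(2)] by (auto simp: insert_commute)
  then show ?thesis unfolding \<tau>_def .
qed

lemma rematch_commute:
  assumes p: "pairing p" and "a \<noteq> b" "c \<noteq> d" and "{a, b} \<inter> {c, d} = {}" and "z \<in> V"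
    and "a \<in> V" "b \<in> V" "c \<in> V" "d \<in> V"
  shows "rematch (rematch p c d) a b z = rematch (rematch p a b) c d z"
proof -
  from assms pairingD(2,3)[OF p] show ?thesis unfolding rematch_def by (smt (verit) disjoint_iff insertCI)
qed

lemma psi_edge_commute:
  assumes "PM \<sigma>" and "x \<in> E" "y \<in> E" and "x \<inter> y = {}"
  shows "psi_edge x (psi_edge y \<sigma>) = psi_edge y (psi_edge x \<sigma>)"
proof -
  obtain a b where ab: "x = {a, b}" "a \<noteq> b" "a \<in> V" "b \<in> V" using edge_doubleton[OF assms(2)] by blast
  obtain c d where cd: "y = {c, d}" "c \<noteq> d" "c \<in> V" "d \<in> V" using edge_doubleton[OF assms(3)] by blast
  define p where "p = partner \<sigma>"
  have p: "pairing p" unfolding p_def using perfect_matching_pairing(1)[OF assms(1)] .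
  have "psi_edge x (psi_edge y \<sigma>) = matching_of (rematch (partner (psi_edge y \<sigma>)) a b)"
    using psi_edge_perfect perfect_matching_psi_edge assms ab(1) by metis
  also have "\<dots> = matching_of (rematch (rematch p c d) a b)"
    by (intro matching_of_cong rematch_cong) (use partner_psi_edge assms cd ab in \<open>auto simp: p_def\<close>)
  also have "\<dots> = matching_of (rematch (rematch p a b) c d)"
    by (intro matching_of_cong rematch_commute[OF p]) (use ab cd assms(4) in auto)
  also have "\<dots> = matching_of (rematch (partner (psi_edge x \<sigma>)) c d)"
    by (intro matching_of_cong rematch_cong) (use partner_psi_edge assms cd ab in \<open>auto simp: p_def\<close>)
  also have "\<dots> = psi_edge y (psi_edge x \<sigma>)"
    using psi_edge_perfect perfect_matching_psi_edge assms cd(1) by metis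
  finally show ?thesis .
qed

text \<open>\<open>psi_edge\<close> commutes only on perfect matchings; freezing everything else turns this
into commutation of functions, as required by \<open>comp_fun_idem_on\<close>.\<close>

definition psi_edge_PM :: "'a set \<Rightarrow> 'a set set \<Rightarrow> 'a set set" where
  "psi_edge_PM e \<sigma> = (if PM \<sigma> then psi_edge e \<sigma> else \<sigma>)"

lemma comp_fun_idem_on_psi_edge_PM:
  assumes "matching E M"
  shows "comp_fun_idem_on M psi_edge_PM"
proof
  fix x y assume "x \<in> M" "y \<in> M"
  then have "x \<in> E" "y \<in> E" "x = y \<or> x \<inter> y = {}" using assms unfolding matching_def by auto
  then show "psi_edge_PM y \<circ> psi_edge_PM x = psi_edge_PM x \<circ> psi_edge_PM y"
    using psi_edge_commute[of _ y x]
    by (cases "x = y") (simp_all add: fun_eq_iff psi_edge_PM_def perfect_matching_psi_edge Int_commute)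
next
  fix x assume "x \<in> M"
  then have "x \<in> E" using assms unfolding matching_def by auto
  then show "psi_edge_PM x \<circ> psi_edge_PM x = psi_edge_PM x"
    by (auto simp: fun_eq_iff psi_edge_PM_def perfect_matching_psi_edge psi_edge_idem)
qed

lemma fold_psi_edge_eq_fold_psi_edge_PM:
  "set es \<subseteq> E \<Longrightarrow> PM \<sigma> \<Longrightarrow> fold psi_edge es \<sigma> = fold psi_edge_PM es \<sigma>"
  by (induction es arbitrary: \<sigma>) (simp_all add: psi_edge_PM_def perfect_matching_psi_edge)

lemma perfect_matching_fold_psi_edge:
  "set es \<subseteq> E \<Longrightarrow> PM \<sigma> \<Longrightarrow> PM (fold psi_edge es \<sigma>)"
  by (induction es arbitrary: \<sigma>) (simp_all add: perfect_matching_psi_edge)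

lemma psi_eq_fold:
  assumes "matching E M" and "PM \<sigma>" and "set es = M"
  shows "psi M \<sigma> = fold psi_edge es \<sigma>"
proof -
  interpret comp_fun_idem_on M psi_edge_PM by (rule comp_fun_idem_on_psi_edge_PM[OF assms(1)])
  have "fold psi_edge xs \<sigma> = Finite_Set.fold psi_edge_PM \<sigma> M" if "set xs = M" for xs
    using that assms(1,2) fold_psi_edge_eq_fold_psi_edge_PM fold_set_fold unfolding matching_def by auto
  moreover obtain es' where "set es' = M" "psi M \<sigma> = fold psi_edge es' \<sigma>"
    using psi_as_fold[OF assms(1)] .
  ultimately show ?thesis using assms(3) by simp
qed

lemma perfect_matching_psi:
  assumes "matching E M" and "PM \<sigma>"
  shows "PM (psi M \<sigma>)"
proof -
  obtain es where "set es = M" "psi M \<sigma> = fold psi_edge es \<sigma>"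
    using psi_as_fold[OF assms(1)] .
  with assms show ?thesis using perfect_matching_fold_psi_edge unfolding matching_def by auto
qed

lemma psi_psi_eq_psi_Un:
  assumes "matching E (M \<union> M')" and "PM \<sigma>"
  shows "psi M (psi M' \<sigma>) = psi (M' \<union> M) \<sigma>"
proof -
  have M: "matching E M" and M': "matching E M'" using matching_subset[OF assms(1)] by auto
  obtain es where es: "set es = M" using psi_as_fold[OF M] by metis
  obtain es' where es': "set es' = M'" using psi_as_fold[OF M'] by metis
  have "psi M (psi M' \<sigma>) = fold psi_edge es (fold psi_edge es' \<sigma>)"
    using psi_eq_fold[OF M perfect_matching_psi[OF M' assms(2)] es] psi_eq_fold[OF M' assms(2) es'] by simp
  also have "\<dots> = psi (M' \<union> M) \<sigma>"
    using psi_eq_fold[of "M' \<union> M" \<sigma> "es' @ es"] assms es es' by (simp add: Un_commute)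
  finally show ?thesis .
qed

lemma mstep_iff: "mstep V E \<sigma> M \<sigma>' \<longleftrightarrow> PM \<sigma> \<and> M \<subseteq> \<sigma> \<and> PM \<sigma>' \<and> psi M \<sigma>' = \<sigma>"
  unfolding mstep_def flaw_def resample_set_def by auto

lemma mstep_swap:
  assumes "matching E (f \<union> g)" and "mstep V E \<sigma>1 f \<sigma>2" and "mstep V E \<sigma>2 g \<sigma>3"
  shows "mstep V E \<sigma>1 g (psi f \<sigma>3)" and "mstep V E (psi f \<sigma>3) f \<sigma>3"
proof -
  have f: "matching E f" and g: "matching E g" using matching_subset[OF assms(1)] by auto
  have \<sigma>3: "PM \<sigma>3" and \<sigma>1: "PM \<sigma>1" "\<sigma>1 = psi f (psi g \<sigma>3)" using assms(2,3) unfolding mstep_iff by auto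
  have "\<sigma>1 = psi g (psi f \<sigma>3)" using \<sigma>1(2) psi_psi_eq_psi_Un[OF assms(1) \<sigma>3] psi_psi_eq_psi_Un[of g f, OF _ \<sigma>3] assms(1)
    by (simp add: Un_commute)
  then show "mstep V E \<sigma>1 g (psi f \<sigma>3)"
    using \<sigma>1(1) Un_subset_psi[of g "{}"] g perfect_matching_psi[OF f \<sigma>3] unfolding mstep_iff by auto
  show "mstep V E (psi f \<sigma>3) f \<sigma>3"
    using \<sigma>3 Un_subset_psi[of f "{}"] f perfect_matching_psi[OF f \<sigma>3] unfolding mstep_iff by auto
qed

lemma weakly_commutative_mstep: "weakly_commutative (mstep V E) F (dep E)"
  unfolding weakly_commutative_def Let_def
proof (intro exI conjI)
  let ?W = "{(\<sigma>1, f, \<sigma>2, g, \<sigma>3). f \<in> F \<and> g \<in> F \<and> \<not> dep E f g \<and> mstep V E \<sigma>1 f \<sigma>2 \<and> mstep V E \<sigma>2 g \<sigma>3}"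
  let ?\<Phi> = "\<lambda>(\<sigma>1, f, \<sigma>2, g, \<sigma>3). (\<sigma>1, g, psi f \<sigma>3, f, \<sigma>3)"
  show "inj_on ?\<Phi> ?W"
    by (rule inj_onI) (auto simp: mstep_iff)
  show "\<forall>(\<sigma>1, f, \<sigma>2, g, \<sigma>3) \<in> ?W. \<exists>\<sigma>2'. ?\<Phi> (\<sigma>1, f, \<sigma>2, g, \<sigma>3) = (\<sigma>1, g, \<sigma>2', f, \<sigma>3) \<and>
      mstep V E \<sigma>1 g \<sigma>2' \<and> mstep V E \<sigma>2' f \<sigma>3"
    using mstep_swap unfolding dep_def by fastforce
qed

lemma potential_causality_graph_mstep: "potential_causality_graph (mstep V E) (flaw V E) F (dep E)"
  unfolding potential_causality_graph_def
proof (intro ballI allI impI subsetI)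
  fix f \<sigma> \<sigma>' g
  assume step: "mstep V E \<sigma> f \<sigma>'" and g: "g \<in> {g \<in> F. \<sigma>' \<in> flaw V E g}"
  show "g \<in> ({g \<in> F. \<sigma> \<in> flaw V E g} - {f}) \<union> {g. dep E f g}"
  proof (cases "dep E f g")
    case False
    then have "matching E (f \<union> g)" "f \<noteq> g" unfolding dep_def by auto
    moreover have "g \<subseteq> \<sigma>'" using g unfolding flaw_def by blast
    ultimately have "g \<subseteq> \<sigma>" using Un_subset_psi[of f g \<sigma>'] step unfolding mstep_iff by auto
    then show ?thesis using g step \<open>f \<noteq> g\<close> unfolding mstep_iff flaw_def by auto
  qed simp
qed

end

lemma path_closed_graph_P1:
  assumes "finite V" and "P1_graph V E"
  shows "path_closed_graph V E"
proof
  have E: "E = {{u, v} | u v. u \<in> V \<and> v \<in> V \<and> u \<noteq> v}" using assms(2) unfolding P1_graph_def .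
  show "\<exists>a b. e = {a, b} \<and> a \<noteq> b \<and> a \<in> V \<and> b \<in> V" if "e \<in> E" for e
    using that unfolding E by blast
  fix x u v y assume "{x, u} \<in> E" "{v, y} \<in> E" "x \<noteq> y"
  then show "{x, y} \<in> E" unfolding E by (auto simp: doubleton_eq_iff)
qed fact

lemma path_closed_graph_P2:
  assumes "finite V" and "P2_graph V E"
  shows "path_closed_graph V E"
proof -
  obtain r :: nat and A B where
    disj: "\<forall>i<r. \<forall>j<r. A i \<inter> B j = {} \<and> (i \<noteq> j \<longrightarrow> A i \<inter> A j = {} \<and> B i \<inter> B j = {})"
    and V: "V = (\<Union>i<r. A i \<union> B i)"
    and E: "E = {{u, v} | u v i. i < r \<and> u \<in> A i \<and> v \<in> B i}"
    using assms(2) unfolding P2_graph_def by blast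
  have edge: "\<exists>i<r. (x \<in> A i \<and> u \<in> B i) \<or> (x \<in> B i \<and> u \<in> A i)" if "{x, u} \<in> E" for x u
    using that unfolding E by (auto simp: doubleton_eq_iff)
  show ?thesis
  proof
    show "\<exists>a b. e = {a, b} \<and> a \<noteq> b \<and> a \<in> V \<and> b \<in> V" if "e \<in> E" for e
      using that disj unfolding E V by blast
    fix x u v y assume "{x, u} \<in> E" "{u, v} \<in> E" "{v, y} \<in> E"
    then obtain i j k where i: "i < r" "(x \<in> A i \<and> u \<in> B i) \<or> (x \<in> B i \<and> u \<in> A i)"
      and "j < r" "(u \<in> A j \<and> v \<in> B j) \<or> (u \<in> B j \<and> v \<in> A j)"
      and "k < r" "(v \<in> A k \<and> y \<in> B k) \<or> (v \<in> B k \<and> y \<in> A k)"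
      using edge by metis
    then have "(x \<in> A i \<and> y \<in> B i) \<or> (x \<in> B i \<and> y \<in> A i)" using disj by blast
    then show "{x, y} \<in> E" unfolding E using i(1) by (auto simp: insert_commute)
  qed fact
qed

theorem proposition6:
  fixes V :: "'a set" and E :: "'a set set" and n :: nat and F :: "'a set set set"
  assumes "finite V" and "card V = 2 * n"
    and "P1_graph V E \<or> P2_graph V E"
    and "F \<subseteq> {M. matching E M \<and> flaw V E M \<noteq> {}}"
  shows
    "(\<forall>M \<sigma> es. matching E M \<longrightarrow> perfect_matching V E \<sigma> \<longrightarrow> distinct es \<longrightarrow> set es = M \<longrightarrow>
        (\<forall>i\<in>{1..length es}. set (take i es) \<subseteq> psi_list (take i es) \<sigma>) \<and> M \<subseteq> psi M \<sigma>)
     \<and> (\<forall>\<sigma> M M'. perfect_matching V E \<sigma> \<longrightarrow> matching E M \<longrightarrow> matching E M' \<longrightarrow>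
          matching E (M \<union> M') \<longrightarrow> psi M (psi M' \<sigma>) = psi M' (psi M \<sigma>))
     \<and> weakly_commutative (mstep V E) F (dep E)
     \<and> potential_causality_graph (mstep V E) (flaw V E) F (dep E)"
proof -
  interpret path_closed_graph V E
    using assms(1,3) path_closed_graph_P1 path_closed_graph_P2 by blast
  have "set (take i es) \<subseteq> psi_list (take i es) \<sigma>" if "matching E (set es)" for es i \<sigma>
    using Un_subset_fold_psi_edge[of "take i es" "{}"] matching_subset[OF that set_take_subset]
    unfolding psi_list_def by simp
  moreover have "M \<subseteq> psi M \<sigma>" if "matching E M" for M \<sigma>
    using Un_subset_psi[of M "{}"] that by simp
  moreover have "psi M (psi M' \<sigma>) = psi M' (psi M \<sigma>)" if "PM \<sigma>" "matching E (M \<union> M')" for M M' \<sigma>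
    using psi_psi_eq_psi_Un[OF that(2,1)] psi_psi_eq_psi_Un[of M' M, OF _ that(1)] that(2) by (simp add: Un_commute)
  ultimately show ?thesis
    using weakly_commutative_mstep potential_causality_graph_mstep by blast
qed

end
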